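(* For every integer $N\ge 1$ there is a quantum black-box network for input length $N$ that computes ${\rm MAJORITY}$ exactly on $N$-bit inputs and has cost at most $N+1-w(N)$.
   Context: For $X=X_0X_1\cdots X_{N-1}\in\{0,1\}^N$, ${\rm MAJORITY}(X)=0$ if $X$ contains more zeros than ones and ${\rm MAJORITY}(X)=1$ otherwise. $w(N)$ denotes the number of ones in the binary representation of $N$. A quantum black-box network for input length $N$ starts in a fixed computational basis state independent of the input $X$, applies a sequence of unitary operators, each being either an arbitrary unitary independent of $X$ or the query unitary $U_X:|i,b,z\rangle\mapsto|i,b\oplus X_i,z\rangle$ (with $i\in\{0,\dots,N-1\}$ an index, $b$ a bit, $z$ the rest of the workspace), and finally measures in the computational basis; its output is a function of the observed basis state. Its cost is the number of applications of $U_X$. It computes $f$ exactly if on every input $X$ it outputs $f(X)$ with probability $1$. *)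

theory Defs
  imports Complex_Main
begin

fun binweight :: "nat \<Rightarrow> nat" where
  "binweight n = (if n = 0 then 0 else n mod 2 + binweight (n div 2))"

text \<open>MAJORITY of X_0 ... X_{N-1} (True encodes bit 1): 0 iff more zeros than ones.\<close>
definition majority :: "nat \<Rightarrow> (nat \<Rightarrow> bool) \<Rightarrow> bool" where
  "majority N X = (\<not> (card {i. i < N \<and> X i} < card {i. i < N \<and> \<not> X i}))"

text \<open>Computational basis states |i,b,z>: index i < N, bit b, workspace z < M.\<close>
type_synonym bstate = "nat \<times> bool \<times> nat"

definition basis_set :: "nat \<Rightarrow> nat \<Rightarrow> bstate set" where
  "basis_set N M = {0..<N} \<times> (UNIV :: bool set) \<times> {0..<M}"

text \<open>An operator on the span of S is a matrix indexed by basis states (zero outside S).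
  It is unitary if U^* U = I on S (for finite square matrices this is unitarity).\<close>
definition unitary_on :: "bstate set \<Rightarrow> (bstate \<Rightarrow> bstate \<Rightarrow> complex) \<Rightarrow> bool" where
  "unitary_on S U \<longleftrightarrow>
     (\<forall>x\<in>S. \<forall>y\<in>S. (\<Sum>k\<in>S. cnj (U k x) * U k y) = (if x = y then 1 else 0)) \<and>
     (\<forall>x y. x \<notin> S \<or> y \<notin> S \<longrightarrow> U x y = 0)"

definition query_op :: "nat \<Rightarrow> nat \<Rightarrow> (nat \<Rightarrow> bool) \<Rightarrow> bstate \<Rightarrow> bstate \<Rightarrow> complex" where
  "query_op N M X = (\<lambda>(i', b', z') (i, b, z).
     if (i, b, z) \<in> basis_set N M \<and> i' = i \<and> z' = z \<and> b' = (b \<noteq> X i) then 1 else 0)"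

datatype step = Query | Gate "bstate \<Rightarrow> bstate \<Rightarrow> complex"

definition apply_op :: "bstate set \<Rightarrow> (bstate \<Rightarrow> bstate \<Rightarrow> complex) \<Rightarrow> (bstate \<Rightarrow> complex) \<Rightarrow> (bstate \<Rightarrow> complex)" where
  "apply_op S U v = (\<lambda>x. \<Sum>y\<in>S. U x y * v y)"

fun run :: "nat \<Rightarrow> nat \<Rightarrow> (nat \<Rightarrow> bool) \<Rightarrow> step list \<Rightarrow> (bstate \<Rightarrow> complex) \<Rightarrow> (bstate \<Rightarrow> complex)" where
  "run N M X [] v = v"
| "run N M X (Query # gs) v = run N M X gs (apply_op (basis_set N M) (query_op N M X) v)"
| "run N M X (Gate U # gs) v = run N M X gs (apply_op (basis_set N M) U v)"

definition ket :: "bstate \<Rightarrow> bstate \<Rightarrow> complex" where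
  "ket s = (\<lambda>x. if x = s then 1 else 0)"

definition cost :: "step list \<Rightarrow> nat" where
  "cost gs = length (filter (\<lambda>g. g = Query) gs)"

definition network_ok :: "nat \<Rightarrow> nat \<Rightarrow> bstate \<Rightarrow> step list \<Rightarrow> bool" where
  "network_ok N M s0 gs \<longleftrightarrow> s0 \<in> basis_set N M \<and>
     (\<forall>U. Gate U \<in> set gs \<longrightarrow> unitary_on (basis_set N M) U)"

definition out_prob :: "nat \<Rightarrow> nat \<Rightarrow> bstate \<Rightarrow> step list \<Rightarrow> (bstate \<Rightarrow> bool) \<Rightarrow> (nat \<Rightarrow> bool) \<Rightarrow> bool \<Rightarrow> real" where
  "out_prob N M s0 gs out X r =
     (\<Sum>x\<in>{x \<in> basis_set N M. out x = r}. (cmod (run N M X gs (ket s0) x))\<^sup>2)"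

definition computes_exactly :: "nat \<Rightarrow> nat \<Rightarrow> bstate \<Rightarrow> step list \<Rightarrow> (bstate \<Rightarrow> bool) \<Rightarrow> ((nat \<Rightarrow> bool) \<Rightarrow> bool) \<Rightarrow> bool" where
  "computes_exactly N M s0 gs out f \<longleftrightarrow> (\<forall>X. out_prob N M s0 gs out X (f X) = 1)"

end

theory Submission
  imports Defs
begin

text \<open>
  Classically, MAJORITY is decided by N - w(N) adaptive parity queries. Every input position
  starts as a block of weight 1. While two surviving blocks have the same weight 2^k, compare
  their bits: if they differ, the two blocks cancel; if they agree, they merge into one block
  of weight 2^(k+1). This preserves the signed sum of the bits (counted as +1/-1) and the total
  weight N, and lowers the number of blocks, surviving or cancelled, by one. That number never
  drops below w(N), because N is the sum of that many powers of two; so after N - w(N)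
  comparisons the surviving weights are distinct, the heaviest block outweighs all others
  together, and its bit is the majority (if no block survives, the input is a tie).

  A parity X a xor X b costs a single query by phase kickback, and one last query reads the bit
  of the heaviest block. The network stays independent of the input because the workspace
  stores the history of comparison outcomes, from which every gate recomputes the blocks.
\<close>

section \<open>Binary weight\<close>

declare binweight.simps [simp del]

lemma binweight_0 [simp]: "binweight 0 = 0"
  by (simp add: binweight.simps)

lemma binweight_rec: "binweight n = n mod 2 + binweight (n div 2)"
  by (cases "n = 0") (simp_all add: binweight.simps[of n])

lemma binweight_Suc_le: "binweight (Suc n) \<le> Suc (binweight n)"
proof (induction n rule: less_induct)
  case (less n)
  show ?case
  proof (cases "even n")
    case True
    then show ?thesis
      using binweight_rec[of n] binweight_rec[of "Suc n"] by simp
  next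
    case False
    then have "n div 2 < n" "Suc n div 2 = Suc (n div 2)"
      by (auto elim: oddE)
    then show ?thesis
      using less[of "n div 2"] binweight_rec[of n] binweight_rec[of "Suc n"] False
      by (simp add: odd_iff_mod_2_eq_one)
  qed
qed

lemma binweight_add_pow2_le: "binweight (n + 2 ^ k) \<le> Suc (binweight n)"
proof (induction k arbitrary: n)
  case 0
  then show ?case using binweight_Suc_le by simp
next
  case (Suc k)
  have "(n + 2 ^ Suc k) mod 2 = n mod 2" "(n + 2 ^ Suc k) div 2 = n div 2 + 2 ^ k"
    by simp_all
  then show ?case
    using Suc[of "n div 2"] binweight_rec[of n] binweight_rec[of "n + 2 ^ Suc k"]
    by (simp add: add.commute)
qed

lemma binweight_add_sum_list_pow2_le:
  "binweight (n + (\<Sum>k\<leftarrow>ks. 2 ^ f k)) \<le> binweight n + length ks"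
proof (induction ks arbitrary: n)
  case Nil
  then show ?case by simp
next
  case (Cons k ks)
  have "binweight (n + (\<Sum>k\<leftarrow>k # ks. 2 ^ f k)) = binweight ((n + 2 ^ f k) + (\<Sum>k\<leftarrow>ks. 2 ^ f k))"
    by (simp add: add.assoc)
  also have "\<dots> \<le> binweight (n + 2 ^ f k) + length ks"
    by (rule Cons)
  also have "\<dots> \<le> binweight n + length (k # ks)"
    using binweight_add_pow2_le[of n "f k"] by simp
  finally show ?case .
qed

section \<open>The classical pairing procedure\<close>

lemma sum_fun_upd2:
  fixes g :: "'a \<Rightarrow> 'b \<Rightarrow> 'c::comm_monoid_add"
  assumes "finite A" "a \<in> A" "b \<in> A" "a \<noteq> b"
  shows "(\<Sum>r\<in>A. g r ((f(a := x, b := y)) r)) + (g a (f a) + g b (f b))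
       = (\<Sum>r\<in>A. g r (f r)) + (g a x + g b y)"
proof -
  have split: "sum h A = h a + h b + sum h (A - {a, b})" for h :: "'a \<Rightarrow> 'c"
  proof -
    have "sum h A = h a + sum h (A - {a})"
      using assms by (intro sum.remove) auto
    also have "sum h (A - {a}) = h b + sum h (A - {a} - {b})"
      using assms by (intro sum.remove) auto
    also have "A - {a} - {b} = A - {a, b}"
      by auto
    finally show ?thesis
      by (simp add: add.assoc)
  qed
  have "(\<Sum>r\<in>A - {a, b}. g r ((f(a := x, b := y)) r)) = (\<Sum>r\<in>A - {a, b}. g r (f r))"
    by (rule sum.cong) auto
  then have "(\<Sum>r\<in>A. g r ((f(a := x, b := y)) r)) = g a x + g b y + (\<Sum>r\<in>A - {a, b}. g r (f r))"
    unfolding split [of "\<lambda>r. g r ((f(a := x, b := y)) r)"] using assms by simp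
  then show ?thesis
    unfolding split [of "\<lambda>r. g r (f r)"] by (simp add: ac_simps)
qed

text \<open>
  \<open>level c r = Some k\<close>: position r represents a surviving block of 2^k input positions,
  all carrying the bit of r. \<open>cancelled c\<close> lists the levels of the pairs of blocks that cancelled.
\<close>

record config =
  level :: "nat \<Rightarrow> nat option"
  cancelled :: "nat list"

definition initial_config :: config where
  "initial_config = \<lparr>level = (\<lambda>r. Some 0), cancelled = []\<rparr>"

definition mergeable_pair :: "nat \<Rightarrow> config \<Rightarrow> nat \<times> nat \<Rightarrow> bool" where
  "mergeable_pair N c = (\<lambda>(a, b). a < b \<and> b < N \<and> level c a \<noteq> None \<and> level c a = level c b)"

definition has_mergeable_pair :: "nat \<Rightarrow> config \<Rightarrow> bool" where
  "has_mergeable_pair N c \<longleftrightarrow> (\<exists>ab. mergeable_pair N c ab)"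

text \<open>
  The default (0, 1) keeps the two compared positions distinct for every workspace value,
  which makes the gates that move them injective.
\<close>

definition chosen_pair :: "nat \<Rightarrow> config \<Rightarrow> nat \<times> nat" where
  "chosen_pair N c = (if has_mergeable_pair N c then SOME ab. mergeable_pair N c ab else (0, 1))"

definition cancel_pair :: "nat \<Rightarrow> nat \<Rightarrow> config \<Rightarrow> config" where
  "cancel_pair a b c =
     c\<lparr>level := (level c)(a := None, b := None), cancelled := the (level c a) # cancelled c\<rparr>"

definition join_pair :: "nat \<Rightarrow> nat \<Rightarrow> config \<Rightarrow> config" where
  "join_pair a b c = c\<lparr>level := (level c)(a := map_option Suc (level c a), b := None)\<rparr>"

definition merge :: "nat \<Rightarrow> config \<Rightarrow> bool \<Rightarrow> config" where
  "merge N c d =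
     (if has_mergeable_pair N c then
        (case chosen_pair N c of (a, b) \<Rightarrow> if d then cancel_pair a b c else join_pair a b c)
      else c)"

lemma chosen_pair_mergeable:
  "has_mergeable_pair N c \<Longrightarrow> mergeable_pair N c (chosen_pair N c)"
  unfolding has_mergeable_pair_def chosen_pair_def by (auto intro: someI_ex)

lemma chosen_pair_distinct:
  assumes "2 \<le> N"
  shows "fst (chosen_pair N c) \<noteq> snd (chosen_pair N c)"
    and "fst (chosen_pair N c) < N" "snd (chosen_pair N c) < N"
  using chosen_pair_mergeable[of N c] assms
  by (cases "has_mergeable_pair N c"; auto simp: chosen_pair_def mergeable_pair_def split: prod.splits)+

lemma merge_no_pair: "\<not> has_mergeable_pair N c \<Longrightarrow> merge N c d = c"
  by (simp add: merge_def)

lemma merge_cases: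
  assumes "has_mergeable_pair N c" "chosen_pair N c = (a, b)"
  obtains k where "a < b" "b < N" "level c a = Some k" "level c b = Some k"
    "merge N c d = (if d then cancel_pair a b c else join_pair a b c)"
proof -
  have "mergeable_pair N c (a, b)"
    using chosen_pair_mergeable[OF assms(1)] assms(2) by simp
  then obtain k where "a < b" "b < N" "level c a = Some k" "level c b = Some k"
    unfolding mergeable_pair_def by force
  with assms that show ?thesis
    by (simp add: merge_def)
qed

fun weight :: "nat option \<Rightarrow> nat" where
  "weight None = 0"
| "weight (Some k) = 2 ^ k"

lemma weight_eq_0_iff [simp]: "weight u = 0 \<longleftrightarrow> u = None"
  by (cases u) simp_all

definition mass :: "nat \<Rightarrow> config \<Rightarrow> nat" where
  "mass N c = (\<Sum>r<N. weight (level c r)) + (\<Sum>k\<leftarrow>cancelled c. 2 ^ Suc k)"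

definition spin :: "(nat \<Rightarrow> bool) \<Rightarrow> nat \<Rightarrow> int" where
  "spin X r = (if X r then 1 else -1)"

lemma abs_spin [simp]: "\<bar>spin X r\<bar> = 1"
  by (simp add: spin_def)

definition signed_mass :: "nat \<Rightarrow> (nat \<Rightarrow> bool) \<Rightarrow> config \<Rightarrow> int" where
  "signed_mass N X c = (\<Sum>r<N. spin X r * int (weight (level c r)))"

definition potential :: "nat \<Rightarrow> config \<Rightarrow> nat" where
  "potential N c = (\<Sum>r<N. of_bool (level c r \<noteq> None)) + length (cancelled c)"

lemma mass_merge: "mass N (merge N c d) = mass N c"
proof (cases "has_mergeable_pair N c")
  case True
  obtain a b where "chosen_pair N c = (a, b)"
    by fastforce
  with True obtain k where ab: "a < b" "b < N" "level c a = Some k" "level c b = Some k"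
    and merge: "merge N c d = (if d then cancel_pair a b c else join_pair a b c)"
    by (rule merge_cases)
  have upd: "(\<Sum>r<N. weight (((level c)(a := x, b := y)) r)) + (2 ^ k + 2 ^ k)
      = (\<Sum>r<N. weight (level c r)) + (weight x + weight y)" for x y
    using sum_fun_upd2[of "{..<N}" a b "\<lambda>r. weight" "level c" x y] ab by simp
  show ?thesis
    using upd[of None None] upd[of "Some (Suc k)" None] merge ab
    by (simp add: mass_def cancel_pair_def join_pair_def)
next
  case False
  then show ?thesis by (simp add: merge_no_pair)
qed

lemma signed_mass_merge:
  assumes "chosen_pair N c = (a, b)"
  shows "signed_mass N X (merge N c (X a \<noteq> X b)) = signed_mass N X c"
proof (cases "has_mergeable_pair N c")
  case True
  obtain k where ab: "a < b" "b < N" "level c a = Some k" "level c b = Some k"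
    and merge: "merge N c (X a \<noteq> X b) = (if X a \<noteq> X b then cancel_pair a b c else join_pair a b c)"
    using True assms by (rule merge_cases)
  have "(\<Sum>r<N. spin X r * int (weight (((level c)(a := x, b := y)) r))) + (spin X a * 2 ^ k + spin X b * 2 ^ k)
      = signed_mass N X c + (spin X a * int (weight x) + spin X b * int (weight y))" for x y
    using sum_fun_upd2[of "{..<N}" a b "\<lambda>r u. spin X r * int (weight u)" "level c" x y] ab
    by (simp add: signed_mass_def)
  from this[of None None] this[of "Some (Suc k)" None] show ?thesis
    using merge ab by (auto simp: signed_mass_def spin_def cancel_pair_def join_pair_def)
next
  case False
  then show ?thesis by (simp add: merge_no_pair)
qed

lemma potential_merge:
  assumes "has_mergeable_pair N c"
  shows "Suc (potential N (merge N c d)) = potential N c"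
proof -
  obtain a b where "chosen_pair N c = (a, b)"
    by fastforce
  with assms obtain k where ab: "a < b" "b < N" "level c a = Some k" "level c b = Some k"
    and merge: "merge N c d = (if d then cancel_pair a b c else join_pair a b c)"
    by (rule merge_cases)
  have "(\<Sum>r<N. of_bool (((level c)(a := x, b := y)) r \<noteq> None)) + 2
      = (\<Sum>r<N. of_bool (level c r \<noteq> None)) + (of_bool (x \<noteq> None) + of_bool (y \<noteq> None) :: nat)" for x y
    using sum_fun_upd2[of "{..<N}" a b "\<lambda>r u. of_bool (u \<noteq> None) :: nat" "level c" x y] ab by simp
  from this[of None None] this[of "Some (Suc k)" None] show ?thesis
    using merge ab by (simp add: potential_def cancel_pair_def join_pair_def)
qed

lemma binweight_add_sum_weight_le:
  assumes "finite A"
  shows "binweight (n + (\<Sum>r\<in>A. weight (u r))) \<le> binweight n + (\<Sum>r\<in>A. of_bool (u r \<noteq> None))"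
  using assms
proof (induction A rule: finite_induct)
  case empty
  then show ?case by simp
next
  case (insert x A)
  have weight_le: "binweight (m + weight (u x)) \<le> binweight m + of_bool (u x \<noteq> None)" for m
    using binweight_add_pow2_le[of m] by (cases "u x") auto
  have "binweight (n + (\<Sum>r\<in>insert x A. weight (u r))) = binweight ((n + (\<Sum>r\<in>A. weight (u r))) + weight (u x))"
    using insert by (simp add: ac_simps)
  also have "\<dots> \<le> binweight n + (\<Sum>r\<in>A. of_bool (u r \<noteq> None)) + of_bool (u x \<noteq> None)"
    using weight_le insert.IH by (meson add_right_mono order_trans)
  also have "\<dots> = binweight n + (\<Sum>r\<in>insert x A. of_bool (u r \<noteq> None))"
    by (subst sum.insert) (use insert in simp_all)
  finally show ?case .
qed

lemma binweight_mass_le_potential: "binweight (mass N c) \<le> potential N c"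
proof -
  have "binweight (mass N c) = binweight ((0 + (\<Sum>k\<leftarrow>cancelled c. 2 ^ Suc k)) + (\<Sum>r<N. weight (level c r)))"
    by (simp add: mass_def add.commute)
  also have "\<dots> \<le> binweight (0 + (\<Sum>k\<leftarrow>cancelled c. 2 ^ Suc k)) + (\<Sum>r<N. of_bool (level c r \<noteq> None))"
    by (rule binweight_add_sum_weight_le) simp
  also have "\<dots> \<le> potential N c"
    using binweight_add_sum_list_pow2_le[of 0 Suc "cancelled c"] by (simp add: potential_def)
  finally show ?thesis .
qed

text \<open>
  The workspace value z is the list of comparison outcomes written in binary behind a leading 1;
  the current blocks are a function of it.
\<close>

function config_of :: "nat \<Rightarrow> nat \<Rightarrow> config" where
  "config_of N z = (if z \<le> 1 then initial_config else merge N (config_of N (z div 2)) (odd z))"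
  by auto
termination
  by (relation "measure snd") auto

declare config_of.simps [simp del]

definition queried_pair :: "nat \<Rightarrow> nat \<Rightarrow> nat \<times> nat" where
  "queried_pair N z = chosen_pair N (config_of N z)"

fun history :: "nat \<Rightarrow> (nat \<Rightarrow> bool) \<Rightarrow> nat \<Rightarrow> nat" where
  "history N X 0 = 1"
| "history N X (Suc t) = 2 * history N X t +
     of_bool (X (fst (queried_pair N (history N X t))) \<noteq> X (snd (queried_pair N (history N X t))))"

abbreviation round_config :: "nat \<Rightarrow> (nat \<Rightarrow> bool) \<Rightarrow> nat \<Rightarrow> config" where
  "round_config N X t \<equiv> config_of N (history N X t)"

lemma history_bounds: "1 \<le> history N X t \<and> history N X t < 2 ^ Suc t"
  by (induction t) auto

lemma config_of_1 [simp]: "config_of N (Suc 0) = initial_config"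
  by (simp add: config_of.simps)

lemma round_config_Suc:
  assumes "queried_pair N (history N X t) = (a, b)"
  shows "round_config N X (Suc t) = merge N (round_config N X t) (X a \<noteq> X b)"
  using assms history_bounds[of N X t] by (subst config_of.simps) (simp add: queried_pair_def)

lemma mass_round_config: "mass N (round_config N X t) = N"
proof (induction t)
  case 0
  then show ?case by (simp add: mass_def initial_config_def)
next
  case (Suc t)
  then show ?case
    by (metis round_config_Suc mass_merge surj_pair)
qed

lemma signed_mass_round_config: "signed_mass N X (round_config N X t) = (\<Sum>r<N. spin X r)"
proof (induction t)
  case 0
  then show ?case by (simp add: signed_mass_def initial_config_def)
next
  case (Suc t)
  obtain a b where "queried_pair N (history N X t) = (a, b)"
    by fastforce
  then show ?case
    using Suc round_config_Suc signed_mass_merge by (simp add: queried_pair_def)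
qed

lemma potential_round_config:
  "has_mergeable_pair N (round_config N X t) \<Longrightarrow> potential N (round_config N X t) + t = N"
proof (induction t)
  case 0
  then show ?case by (simp add: potential_def initial_config_def)
next
  case (Suc t)
  obtain a b where ab: "queried_pair N (history N X t) = (a, b)"
    by fastforce
  show ?case
  proof (cases "has_mergeable_pair N (round_config N X t)")
    case True
    have "Suc (potential N (round_config N X (Suc t))) = potential N (round_config N X t)"
      using potential_merge[OF True] round_config_Suc[OF ab] by simp
    then show ?thesis
      using Suc.IH[OF True] by simp
  next
    case False
    then show ?thesis
      using Suc.prems round_config_Suc[OF ab] by (simp add: merge_no_pair)
  qed
qed

lemma binweight_le: "binweight N \<le> N"
  using binweight_mass_le_potential[of N initial_config]
  by (simp add: mass_def potential_def initial_config_def)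

definition rounds :: "nat \<Rightarrow> nat" where
  "rounds N = N - binweight N"

lemma no_mergeable_pair_after_rounds:
  "\<not> has_mergeable_pair N (round_config N X (rounds N))"
proof
  let ?T = "rounds N"
  assume pair: "has_mergeable_pair N (round_config N X ?T)"
  obtain a b where ab: "queried_pair N (history N X ?T) = (a, b)"
    by fastforce
  have "Suc (potential N (round_config N X (Suc ?T))) = binweight N"
    using potential_round_config[OF pair] potential_merge[OF pair] round_config_Suc[OF ab] binweight_le[of N]
    by (simp add: rounds_def)
  moreover have "binweight N \<le> potential N (round_config N X (Suc ?T))"
    using binweight_mass_le_potential mass_round_config by metis
  ultimately show False
    by simp
qed

lemma arg_max_on_nat:
  fixes f :: "'a \<Rightarrow> nat"
  assumes "finite S" "S \<noteq> {}"
  shows "arg_max_on f S \<in> S" "\<And>y. y \<in> S \<Longrightarrow> f y \<le> f (arg_max_on f S)"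
proof -
  obtain k where "k \<in> S"
    using assms(2) by blast
  moreover have "\<forall>y. y \<in> S \<longrightarrow> f y < Suc (Max (f ` S))"
    using assms(1) by (simp add: le_imp_less_Suc)
  ultimately show "arg_max_on f S \<in> S" "\<And>y. y \<in> S \<Longrightarrow> f y \<le> f (arg_max_on f S)"
    using arg_max_nat_lemma[of "\<lambda>x. x \<in> S" k f] unfolding arg_max_on_def by blast+
qed

lemma sum_pow2_inj_less:
  assumes "finite A" "inj_on f A" "\<And>r. r \<in> A \<Longrightarrow> f r < k"
  shows "(\<Sum>r\<in>A. 2 ^ f r) < (2 ^ k :: nat)"
proof -
  have "(\<Sum>r\<in>A. 2 ^ f r) = (\<Sum>j\<in>f ` A. 2 ^ j :: nat)"
    using assms(2) by (simp add: sum.reindex)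
  also have "\<dots> \<le> (\<Sum>j = 0..<k. 2 ^ j)"
    using assms by (intro sum_mono2) auto
  also have "\<dots> < 2 ^ k"
    by (simp add: sum_power2)
  finally show ?thesis .
qed

definition active :: "nat \<Rightarrow> config \<Rightarrow> nat set" where
  "active N c = {r. r < N \<and> level c r \<noteq> None}"

definition top_index :: "nat \<Rightarrow> config \<Rightarrow> nat" where
  "top_index N c = (if active N c = {} then 0 else arg_max_on (\<lambda>r. the (level c r)) (active N c))"

lemma top_index_less: "0 < N \<Longrightarrow> top_index N c < N"
  using arg_max_on_nat(1)[of "active N c" "\<lambda>r. the (level c r)"]
  by (auto simp: top_index_def active_def)

lemma top_index_active:
  assumes "active N c \<noteq> {}"
  shows "top_index N c \<in> active N c"
    and "r \<in> active N c \<Longrightarrow> the (level c r) \<le> the (level c (top_index N c))"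
  using arg_max_on_nat[where S = "active N c" and f = "\<lambda>r. the (level c r)"] assms
  by (simp_all add: top_index_def active_def)

lemma inj_on_level_active:
  assumes "\<not> has_mergeable_pair N c"
  shows "inj_on (level c) (active N c)"
proof (rule inj_onI)
  fix r s
  assume "r \<in> active N c" "s \<in> active N c" "level c r = level c s"
  moreover have "\<not> mergeable_pair N c (min r s, max r s)"
    using assms unfolding has_mergeable_pair_def by blast
  ultimately show "r = s"
    by (auto simp: mergeable_pair_def active_def min_def max_def split: if_splits)
qed

lemma sum_weight_below_top_index:
  assumes "\<not> has_mergeable_pair N c" "active N c \<noteq> {}"
  shows "(\<Sum>r\<in>active N c - {top_index N c}. weight (level c r)) < weight (level c (top_index N c))"
proof -
  let ?A = "active N c" and ?t = "top_index N c" and ?lv = "\<lambda>r. the (level c r)"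
  have weight_level: "weight (level c r) = 2 ^ ?lv r" if "r \<in> ?A" for r
    using that by (auto simp: active_def)
  have inj: "inj_on ?lv ?A"
  proof (rule inj_onI)
    fix r s
    assume rs: "r \<in> ?A" "s \<in> ?A" "?lv r = ?lv s"
    then have "level c r = level c s"
      by (auto simp: active_def)
    with rs show "r = s"
      using inj_on_level_active[OF assms(1)] by (auto dest: inj_onD)
  qed
  have below: "?lv r < ?lv ?t" if r: "r \<in> ?A - {?t}" for r
  proof -
    have "?lv r \<le> ?lv ?t"
      using top_index_active(2)[OF assms(2)] r by blast
    moreover have "?lv r \<noteq> ?lv ?t"
      using inj r top_index_active(1)[OF assms(2)] by (auto dest: inj_onD)
    ultimately show ?thesis
      by simp
  qed
  have "(\<Sum>r\<in>?A - {?t}. 2 ^ ?lv r) < (2 ^ ?lv ?t :: nat)"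
    using below inj_on_subset[OF inj, of "?A - {?t}"] by (intro sum_pow2_inj_less) (auto simp: active_def)
  then show ?thesis
    using top_index_active(1)[OF assms(2)] by (simp add: weight_level)
qed

lemma majority_iff_sum_spin: "majority N X \<longleftrightarrow> 0 \<le> (\<Sum>r<N. spin X r)"
proof -
  have sets: "{..<N} \<inter> {i. X i} = {i. i < N \<and> X i}" "{..<N} \<inter> - {i. X i} = {i. i < N \<and> \<not> X i}"
    by auto
  have "(\<Sum>r<N. spin X r) = int (card {i. i < N \<and> X i}) - int (card {i. i < N \<and> \<not> X i})"
    unfolding spin_def sum.If_cases[OF finite_lessThan] sets by simp
  then show ?thesis
    unfolding majority_def by linarith
qed

lemma majority_from_final_config:
  assumes no_pair: "\<not> has_mergeable_pair N c"
    and signed: "signed_mass N X c = (\<Sum>r<N. spin X r)"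
  shows "majority N X \<longleftrightarrow> X (top_index N c) \<or> active N c = {}"
proof (cases "active N c = {}")
  case True
  then have "signed_mass N X c = 0"
    by (auto simp: signed_mass_def active_def intro!: sum.neutral)
  then show ?thesis
    using True signed by (simp add: majority_iff_sum_spin)
next
  case False
  let ?t = "top_index N c" and ?term = "\<lambda>r. spin X r * int (weight (level c r))"
  have t: "?t \<in> active N c"
    using top_index_active(1)[OF False] .
  have "\<bar>\<Sum>r\<in>{..<N} - {?t}. ?term r\<bar> \<le> (\<Sum>r\<in>{..<N} - {?t}. int (weight (level c r)))"
    by (rule order_trans[OF sum_abs]) (simp add: abs_mult)
  also have "\<dots> = int (\<Sum>r\<in>active N c - {?t}. weight (level c r))"
    unfolding of_nat_sum by (rule sum.mono_neutral_right) (auto simp: active_def)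
  also have "\<dots> < int (weight (level c ?t))"
    using sum_weight_below_top_index[OF no_pair False] by (simp only: of_nat_less_iff)
  finally have "\<bar>\<Sum>r\<in>{..<N} - {?t}. ?term r\<bar> < int (weight (level c ?t))" .
  moreover have "(\<Sum>r<N. spin X r) = ?term ?t + (\<Sum>r\<in>{..<N} - {?t}. ?term r)"
    unfolding signed [symmetric] signed_mass_def using t by (intro sum.remove) (auto simp: active_def)
  ultimately show ?thesis
    using False by (auto simp: majority_iff_sum_spin spin_def)
qed

section \<open>Quantum states and gates\<close>

type_synonym state = "bstate \<Rightarrow> complex"
type_synonym operator = "bstate \<Rightarrow> bstate \<Rightarrow> complex"

definition add_state :: "state \<Rightarrow> state \<Rightarrow> state" where
  "add_state u v = (\<lambda>x. u x + v x)"

definition scale_state :: "complex \<Rightarrow> state \<Rightarrow> state" where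
  "scale_state c v = (\<lambda>x. c * v x)"

lemma scale_state_1 [simp]: "scale_state 1 v = v"
  by (simp add: scale_state_def)

lemma apply_op_add_state: "apply_op S U (add_state u v) = add_state (apply_op S U u) (apply_op S U v)"
  unfolding apply_op_def add_state_def by (simp add: distrib_left sum.distrib)

lemma apply_op_scale_state: "apply_op S U (scale_state c v) = scale_state c (apply_op S U v)"
  unfolding apply_op_def scale_state_def by (simp add: sum_distrib_left mult_ac)

lemma apply_op_ket: "finite S \<Longrightarrow> y \<in> S \<Longrightarrow> apply_op S U (ket y) = (\<lambda>x. U x y)"
  unfolding apply_op_def ket_def by (simp add: if_distrib cong: if_cong)

lemma run_add_state: "run N M X gs (add_state u v) = add_state (run N M X gs u) (run N M X gs v)"
proof (induction gs arbitrary: u v)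
  case (Cons g gs)
  then show ?case by (cases g) (simp_all add: apply_op_add_state)
qed simp

lemma run_scale_state: "run N M X gs (scale_state c v) = scale_state c (run N M X gs v)"
proof (induction gs arbitrary: v)
  case (Cons g gs)
  then show ?case by (cases g) (simp_all add: apply_op_scale_state)
qed simp

lemma run_append: "run N M X (gs @ hs) v = run N M X hs (run N M X gs v)"
proof (induction gs arbitrary: v)
  case (Cons g gs)
  then show ?case by (cases g) simp_all
qed simp

lemma finite_basis_set [simp]: "finite (basis_set N M)"
  unfolding basis_set_def by simp

lemma mem_basis_set [simp]: "(i, b, z) \<in> basis_set N M \<longleftrightarrow> i < N \<and> z < M"
  unfolding basis_set_def by auto

definition bit_sign :: "bool \<Rightarrow> complex" where
  "bit_sign b = (if b then -1 else 1)"

definition inv_sqrt2 :: complex where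
  "inv_sqrt2 = complex_of_real (1 / sqrt 2)"

lemma inv_sqrt2_square: "inv_sqrt2 * inv_sqrt2 = 1 / 2"
  unfolding inv_sqrt2_def by (simp flip: of_real_mult)

lemma inv_sqrt2_square_mult: "inv_sqrt2 * (c * inv_sqrt2) = c / 2"
  by (metis inv_sqrt2_square mult.left_commute mult.right_neutral times_divide_eq_right)

lemma cnj_inv_sqrt2 [simp]: "cnj inv_sqrt2 = inv_sqrt2"
  unfolding inv_sqrt2_def by simp

definition hadamard :: "bstate set \<Rightarrow> operator" where
  "hadamard S = (\<lambda>(i', b', z') (i, b, z).
     if (i, b, z) \<in> S \<and> i' = i \<and> z' = z then (if b \<and> b' then - inv_sqrt2 else inv_sqrt2) else 0)"

definition pauli_z :: "bstate set \<Rightarrow> operator" where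
  "pauli_z S = (\<lambda>x y. if y \<in> S \<and> x = y then bit_sign (fst (snd y)) else 0)"

definition perm_gate :: "bstate set \<Rightarrow> (bstate \<Rightarrow> bstate) \<Rightarrow> operator" where
  "perm_gate S \<pi> = (\<lambda>x y. if y \<in> S \<and> x = \<pi> y then 1 else 0)"

lemma hadamard_ket:
  assumes "finite S" "(i, b, z) \<in> S"
  shows "apply_op S (hadamard S) (ket (i, b, z))
       = scale_state inv_sqrt2 (add_state (ket (i, False, z)) (scale_state (bit_sign b) (ket (i, True, z))))"
  using assms
  by (subst apply_op_ket) (auto simp: hadamard_def bit_sign_def scale_state_def add_state_def ket_def fun_eq_iff)

lemma pauli_z_ket:
  assumes "finite S" "(i, b, z) \<in> S"
  shows "apply_op S (pauli_z S) (ket (i, b, z)) = scale_state (bit_sign b) (ket (i, b, z))"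
  using assms by (subst apply_op_ket) (auto simp: pauli_z_def scale_state_def ket_def fun_eq_iff)

lemma perm_gate_ket: "finite S \<Longrightarrow> y \<in> S \<Longrightarrow> apply_op S (perm_gate S \<pi>) (ket y) = ket (\<pi> y)"
  by (subst apply_op_ket) (auto simp: perm_gate_def ket_def fun_eq_iff)

lemma query_op_ket:
  assumes "(i, b, z) \<in> basis_set N M"
  shows "apply_op (basis_set N M) (query_op N M X) (ket (i, b, z)) = ket (i, b \<noteq> X i, z)"
  using assms by (subst apply_op_ket) (auto simp: query_op_def ket_def fun_eq_iff)

lemma unitary_perm_gate:
  assumes "bij_betw \<pi> S S" "finite S"
  shows "unitary_on S (perm_gate S \<pi>)"
proof -
  have maps_to: "\<pi> y \<in> S" if "y \<in> S" for y
    using assms(1) that by (rule bij_betw_apply)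
  have columns: "(\<Sum>k\<in>S. cnj (perm_gate S \<pi> k x) * perm_gate S \<pi> k y) = (if x = y then 1 else 0)"
    if "x \<in> S" "y \<in> S" for x y
  proof -
    have "(\<Sum>k\<in>S. cnj (perm_gate S \<pi> k x) * perm_gate S \<pi> k y) = (\<Sum>k\<in>S. if k = \<pi> x \<and> \<pi> x = \<pi> y then 1 else 0)"
      using that by (intro sum.cong) (auto simp: perm_gate_def)
    also have "\<dots> = (if \<pi> x = \<pi> y then 1 else 0)"
      using maps_to[OF that(1)] assms(2) by (cases "\<pi> x = \<pi> y") (simp_all add: sum.delta)
    also have "\<dots> = (if x = y then 1 else 0)"
      using assms that by (auto simp: bij_betw_def dest: inj_onD)
    finally show ?thesis .
  qed
  moreover have "perm_gate S \<pi> x y = 0" if "x \<notin> S \<or> y \<notin> S" for x y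
    using that maps_to[of y] by (auto simp: perm_gate_def)
  ultimately show ?thesis
    unfolding unitary_on_def by blast
qed

lemma unitary_pauli_z:
  assumes "finite S"
  shows "unitary_on S (pauli_z S)"
proof -
  have "(\<Sum>k\<in>S. cnj (pauli_z S k x) * pauli_z S k y) = (if x = y then 1 else 0)"
    if "x \<in> S" "y \<in> S" for x y
  proof -
    have "cnj (pauli_z S k x) * pauli_z S k y = (if k = x \<and> x = y then 1 else 0)" for k
      using that by (cases "k = x"; cases "x = y") (simp_all add: pauli_z_def bit_sign_def)
    then have "(\<Sum>k\<in>S. cnj (pauli_z S k x) * pauli_z S k y) = (\<Sum>k\<in>S. if k = x \<and> x = y then 1 else 0)"
      by simp
    also have "\<dots> = (if x = y then 1 else 0)"
      using that assms by (cases "x = y") (simp_all add: sum.delta)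
    finally show ?thesis .
  qed
  moreover have "pauli_z S x y = 0" if "x \<notin> S \<or> y \<notin> S" for x y
    using that by (auto simp: pauli_z_def)
  ultimately show ?thesis
    unfolding unitary_on_def by blast
qed

lemma unitary_hadamard: "unitary_on (basis_set N M) (hadamard (basis_set N M))"
proof -
  let ?S = "basis_set N M" and ?H = "hadamard (basis_set N M)"
  have "(\<Sum>k\<in>?S. cnj (?H k (i, b, z)) * ?H k (i', b', z')) = (if (i, b, z) = (i', b', z') then 1 else 0)"
    if "(i, b, z) \<in> ?S" "(i', b', z') \<in> ?S" for i b z i' b' z'
  proof -
    have "(\<Sum>k\<in>?S. cnj (?H k (i, b, z)) * ?H k (i', b', z'))
        = (\<Sum>k\<in>{(i, False, z), (i, True, z)}. cnj (?H k (i, b, z)) * ?H k (i', b', z'))"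
      using that by (intro sum.mono_neutral_right) (auto simp: hadamard_def)
    then show ?thesis
      using that by (auto simp: hadamard_def inv_sqrt2_square)
  qed
  moreover have "?H x y = 0" if "x \<notin> ?S \<or> y \<notin> ?S" for x y
    using that by (auto simp: hadamard_def split: prod.splits)
  ultimately show ?thesis
    unfolding unitary_on_def by fast
qed

text \<open>Phase kickback: the query acts on the bit register prepared in (|0> - |1>) / sqrt 2.\<close>

definition phase_oracle :: "nat \<Rightarrow> nat \<Rightarrow> step list" where
  "phase_oracle N M = [Gate (hadamard (basis_set N M)), Gate (pauli_z (basis_set N M)), Query,
                       Gate (pauli_z (basis_set N M)), Gate (hadamard (basis_set N M))]"

lemma run_phase_oracle:
  assumes "(i, False, z) \<in> basis_set N M"
  shows "run N M X (phase_oracle N M) (ket (i, False, z)) = scale_state (bit_sign (X i)) (ket (i, False, z))"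
  using assms
  by (simp add: phase_oracle_def apply_op_add_state apply_op_scale_state hadamard_ket pauli_z_ket query_op_ket)
    (cases "X i"; auto simp: bit_sign_def add_state_def scale_state_def ket_def inv_sqrt2_square_mult fun_eq_iff)

lemma parity_round:
  assumes "w < M" "p < N" "q < N"
    and "apply_op (basis_set N M) G_in (ket (0, False, w)) = ket (p, False, w)"
    and "apply_op (basis_set N M) G_in (ket (0, True, w)) = ket (q, False, w)"
    and "apply_op (basis_set N M) G_out (ket (p, False, w)) = ket (0, False, w)"
    and "apply_op (basis_set N M) G_out (ket (q, False, w)) = ket (0, True, w)"
  shows "run N M X ([Gate (hadamard (basis_set N M)), Gate G_in] @ phase_oracle N M @
                    [Gate G_out, Gate (hadamard (basis_set N M))]) (ket (0, False, w))
       = scale_state (bit_sign (X p)) (ket (0, X p \<noteq> X q, w))"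
proof -
  have "run N M X [Gate (hadamard (basis_set N M)), Gate G_in] (ket (0, False, w))
      = scale_state inv_sqrt2 (add_state (ket (p, False, w)) (ket (q, False, w)))"
    using assms by (simp add: hadamard_ket apply_op_add_state apply_op_scale_state bit_sign_def)
  moreover have "run N M X (phase_oracle N M) \<dots> = scale_state inv_sqrt2
      (add_state (scale_state (bit_sign (X p)) (ket (p, False, w))) (scale_state (bit_sign (X q)) (ket (q, False, w))))"
    using assms by (simp add: run_add_state run_scale_state run_phase_oracle)
  moreover have "run N M X [Gate G_out, Gate (hadamard (basis_set N M))] \<dots>
      = scale_state (bit_sign (X p)) (ket (0, X p \<noteq> X q, w))"
    using assms
    by (simp add: hadamard_ket apply_op_add_state apply_op_scale_state)
      (cases "X p"; cases "X q"; auto simp: bit_sign_def add_state_def scale_state_def ket_def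
        inv_sqrt2_square_mult fun_eq_iff)
  ultimately show ?thesis
    by (simp add: run_append)
qed

section \<open>The network\<close>

lemma extend_inj_to_permutation:
  assumes "finite S" "A \<subseteq> S" "inj_on g A" "g ` A \<subseteq> S"
  shows "\<exists>\<pi>. bij_betw \<pi> S S \<and> (\<forall>a\<in>A. \<pi> a = g a)"
proof -
  have "card (S - A) = card (S - g ` A)"
    using assms by (simp add: card_Diff_subset card_image finite_subset)
  then obtain h where h: "bij_betw h (S - A) (S - g ` A)"
    using assms finite_same_card_bij by blast
  define \<pi> where "\<pi> x = (if x \<in> A then g x else h x)" for x
  have "bij_betw \<pi> A (g ` A)"
    unfolding \<pi>_def using assms(3) by (simp add: bij_betw_def inj_on_def image_def)
  moreover have "bij_betw \<pi> (S - A) (S - g ` A)"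
    unfolding \<pi>_def using h by (rule bij_betw_cong [THEN iffD1, rotated]) auto
  ultimately have "bij_betw \<pi> (A \<union> (S - A)) (g ` A \<union> (S - g ` A))"
    by (rule bij_betw_combine) auto
  moreover have "A \<union> (S - A) = S" "g ` A \<union> (S - g ` A) = S"
    using assms by auto
  ultimately show ?thesis
    unfolding \<pi>_def by auto
qed

definition relabel_gate :: "bstate set \<Rightarrow> bstate set \<Rightarrow> (bstate \<Rightarrow> bstate) \<Rightarrow> operator" where
  "relabel_gate S A g = perm_gate S (SOME \<pi>. bij_betw \<pi> S S \<and> (\<forall>a\<in>A. \<pi> a = g a))"

lemma relabel_gate:
  assumes "finite S" "A \<subseteq> S" "inj_on g A" "g ` A \<subseteq> S"
  shows "unitary_on S (relabel_gate S A g)"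
    and "a \<in> A \<Longrightarrow> apply_op S (relabel_gate S A g) (ket a) = ket (g a)"
proof -
  let ?\<pi> = "SOME \<pi>. bij_betw \<pi> S S \<and> (\<forall>a\<in>A. \<pi> a = g a)"
  have \<pi>: "bij_betw ?\<pi> S S \<and> (\<forall>a\<in>A. ?\<pi> a = g a)"
    using extend_inj_to_permutation[OF assms] by (rule someI_ex)
  then show "unitary_on S (relabel_gate S A g)"
    unfolding relabel_gate_def using assms(1) by (simp add: unitary_perm_gate)
  show "apply_op S (relabel_gate S A g) (ket a) = ket (g a)" if "a \<in> A"
    unfolding relabel_gate_def using \<pi> that assms(1,2) by (auto simp: perm_gate_ket)
qed

definition spread_gate :: "nat \<Rightarrow> nat \<Rightarrow> operator" where
  "spread_gate N M = relabel_gate (basis_set N M) {(0, b, w) | b w. w < M}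
     (\<lambda>(i, b, w). (if b then snd (queried_pair N w) else fst (queried_pair N w), False, w))"

definition gather_gate :: "nat \<Rightarrow> nat \<Rightarrow> operator" where
  "gather_gate N M = relabel_gate (basis_set N M)
     {(i, False, w) | i w. w < M \<and> (i = fst (queried_pair N w) \<or> i = snd (queried_pair N w))}
     (\<lambda>(i, b, w). (0, i = snd (queried_pair N w), w))"

definition record_gate :: "nat \<Rightarrow> nat \<Rightarrow> operator" where
  "record_gate N M = relabel_gate (basis_set N M) {(0, b, w) | b w. 2 * w + 1 < M}
     (\<lambda>(i, b, w). (0, False, 2 * w + of_bool b))"

definition select_gate :: "nat \<Rightarrow> nat \<Rightarrow> operator" where
  "select_gate N M = relabel_gate (basis_set N M) {(0, False, w) | w. w < M}
     (\<lambda>(i, b, w). (top_index N (config_of N w), False, w))"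

lemma queried_pair_distinct:
  assumes "2 \<le> N"
  shows "fst (queried_pair N w) \<noteq> snd (queried_pair N w)"
    and "fst (queried_pair N w) < N" "snd (queried_pair N w) < N"
  using chosen_pair_distinct[OF assms] by (simp_all add: queried_pair_def)

lemma spread_gate:
  assumes "2 \<le> N"
  shows "unitary_on (basis_set N M) (spread_gate N M)"
    and "w < M \<Longrightarrow> apply_op (basis_set N M) (spread_gate N M) (ket (0, False, w))
                    = ket (fst (queried_pair N w), False, w)"
    and "w < M \<Longrightarrow> apply_op (basis_set N M) (spread_gate N M) (ket (0, True, w))
                    = ket (snd (queried_pair N w), False, w)"
proof -
  let ?A = "{(0, b, w) | b w. w < M}"
    and ?g = "\<lambda>(i, b, w). (if b then snd (queried_pair N w) else fst (queried_pair N w), False, w)"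
  have "?A \<subseteq> basis_set N M" "inj_on ?g ?A" "?g ` ?A \<subseteq> basis_set N M"
    using assms queried_pair_distinct[OF assms] queried_pair_distinct(1)[OF assms, THEN not_sym]
    by (auto simp: inj_on_def split: if_splits)
  note gate = relabel_gate[OF finite_basis_set this, folded spread_gate_def]
  show "unitary_on (basis_set N M) (spread_gate N M)"
    by (rule gate(1))
  show "w < M \<Longrightarrow> apply_op (basis_set N M) (spread_gate N M) (ket (0, False, w))
                    = ket (fst (queried_pair N w), False, w)"
    and "w < M \<Longrightarrow> apply_op (basis_set N M) (spread_gate N M) (ket (0, True, w))
                    = ket (snd (queried_pair N w), False, w)"
    using gate(2) by auto
qed

lemma gather_gate:
  assumes "2 \<le> N"
  shows "unitary_on (basis_set N M) (gather_gate N M)"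
    and "w < M \<Longrightarrow> apply_op (basis_set N M) (gather_gate N M) (ket (fst (queried_pair N w), False, w))
                    = ket (0, False, w)"
    and "w < M \<Longrightarrow> apply_op (basis_set N M) (gather_gate N M) (ket (snd (queried_pair N w), False, w))
                    = ket (0, True, w)"
proof -
  let ?A = "{(i, False, w) | i w. w < M \<and> (i = fst (queried_pair N w) \<or> i = snd (queried_pair N w))}"
    and ?g = "\<lambda>(i, b, w). (0, i = snd (queried_pair N w), w)"
  have "?A \<subseteq> basis_set N M" "inj_on ?g ?A" "?g ` ?A \<subseteq> basis_set N M"
    using assms queried_pair_distinct[OF assms] queried_pair_distinct(1)[OF assms, THEN not_sym]
    by (auto simp: inj_on_def)
  note gate = relabel_gate[OF finite_basis_set this, folded gather_gate_def]
  show "unitary_on (basis_set N M) (gather_gate N M)"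
    by (rule gate(1))
  show "w < M \<Longrightarrow> apply_op (basis_set N M) (gather_gate N M) (ket (fst (queried_pair N w), False, w))
                    = ket (0, False, w)"
    and "w < M \<Longrightarrow> apply_op (basis_set N M) (gather_gate N M) (ket (snd (queried_pair N w), False, w))
                    = ket (0, True, w)"
    using gate(2) queried_pair_distinct(1)[OF assms] by auto
qed

lemma record_gate:
  assumes "1 \<le> N"
  shows "unitary_on (basis_set N M) (record_gate N M)"
    and "2 * w + 1 < M \<Longrightarrow> apply_op (basis_set N M) (record_gate N M) (ket (0, b, w))
                    = ket (0, False, 2 * w + of_bool b)"
proof -
  let ?A = "{(0, b, w) | b w. 2 * w + 1 < M}"
    and ?g = "\<lambda>(i, b, w). (0, False, 2 * w + of_bool b)"
  have "?A \<subseteq> basis_set N M" "inj_on ?g ?A" "?g ` ?A \<subseteq> basis_set N M"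
    using assms by (auto simp: inj_on_def; presburger)+
  note gate = relabel_gate[OF finite_basis_set this, folded record_gate_def]
  show "unitary_on (basis_set N M) (record_gate N M)"
    by (rule gate(1))
  show "2 * w + 1 < M \<Longrightarrow> apply_op (basis_set N M) (record_gate N M) (ket (0, b, w))
                    = ket (0, False, 2 * w + of_bool b)"
    using gate(2) by auto
qed

lemma select_gate:
  assumes "1 \<le> N"
  shows "unitary_on (basis_set N M) (select_gate N M)"
    and "w < M \<Longrightarrow> apply_op (basis_set N M) (select_gate N M) (ket (0, False, w))
                    = ket (top_index N (config_of N w), False, w)"
proof -
  let ?A = "{(0, False, w) | w. w < M}"
    and ?g = "\<lambda>(i, b, w). (top_index N (config_of N w), False, w)"
  have "?A \<subseteq> basis_set N M" "inj_on ?g ?A" "?g ` ?A \<subseteq> basis_set N M"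
    using assms top_index_less by (auto simp: inj_on_def)
  note gate = relabel_gate[OF finite_basis_set this, folded select_gate_def]
  show "unitary_on (basis_set N M) (select_gate N M)"
    by (rule gate(1))
  show "w < M \<Longrightarrow> apply_op (basis_set N M) (select_gate N M) (ket (0, False, w))
                    = ket (top_index N (config_of N w), False, w)"
    using gate(2) by auto
qed

definition round_gates :: "nat \<Rightarrow> nat \<Rightarrow> step list" where
  "round_gates N M = [Gate (hadamard (basis_set N M)), Gate (spread_gate N M)] @ phase_oracle N M @
     [Gate (gather_gate N M), Gate (hadamard (basis_set N M)), Gate (record_gate N M)]"

lemma run_round_gates:
  assumes "2 \<le> N" "2 * w + 1 < M" "queried_pair N w = (p, q)"
  shows "run N M X (round_gates N M) (ket (0, False, w))
       = scale_state (bit_sign (X p)) (ket (0, False, 2 * w + of_bool (X p \<noteq> X q)))"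
proof -
  have w: "w < M" and "p < N" "q < N"
    using assms queried_pair_distinct(2,3)[OF assms(1), of w] by auto
  then have "run N M X ([Gate (hadamard (basis_set N M)), Gate (spread_gate N M)] @ phase_oracle N M @
                    [Gate (gather_gate N M), Gate (hadamard (basis_set N M))]) (ket (0, False, w))
       = scale_state (bit_sign (X p)) (ket (0, X p \<noteq> X q, w))"
    using assms spread_gate(2,3)[OF assms(1) w] gather_gate(2,3)[OF assms(1) w] by (intro parity_round) auto
  then show ?thesis
    using assms record_gate(2)[where b = "X p \<noteq> X q" and N = N and M = M]
    by (simp add: round_gates_def run_append run_scale_state apply_op_scale_state)
qed

lemma run_rounds:
  assumes "2 \<le> N \<or> T = 0" "t \<le> T"
  shows "\<exists>c. cmod c = 1 \<and> run N (2 ^ Suc T) X (concat (replicate t (round_gates N (2 ^ Suc T)))) (ket (0, False, 1))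
                          = scale_state c (ket (0, False, history N X t))"
  using assms(2)
proof (induction t)
  case 0
  then show ?case
    by (intro exI [of _ 1]) simp
next
  case (Suc t)
  then obtain c where c: "cmod c = 1"
    and run_t: "run N (2 ^ Suc T) X (concat (replicate t (round_gates N (2 ^ Suc T)))) (ket (0, False, 1))
                = scale_state c (ket (0, False, history N X t))"
    by auto
  obtain p q where pq: "queried_pair N (history N X t) = (p, q)"
    by fastforce
  have "history N X t < 2 ^ Suc t"
    using history_bounds by blast
  moreover have "(2::nat) ^ Suc t \<le> 2 ^ T"
    using Suc.prems by (intro power_increasing) auto
  ultimately have bound: "2 * history N X t + 1 < 2 ^ Suc T"
    by simp
  have two_le: "2 \<le> N"
    using assms(1) Suc.prems by auto
  have replicate_Suc: "concat (replicate (Suc t) gs) = concat (replicate t gs) @ gs" for gs :: "step list"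
    by (simp add: replicate_append_same [symmetric])
  have "run N (2 ^ Suc T) X (concat (replicate (Suc t) (round_gates N (2 ^ Suc T)))) (ket (0, False, 1))
      = scale_state c (run N (2 ^ Suc T) X (round_gates N (2 ^ Suc T)) (ket (0, False, history N X t)))"
    by (simp only: replicate_Suc run_append run_t run_scale_state)
  also have "\<dots> = scale_state (c * bit_sign (X p)) (ket (0, False, history N X (Suc t)))"
    using run_round_gates[OF two_le bound pq] pq by (simp add: scale_state_def mult.assoc)
  finally have "run N (2 ^ Suc T) X (concat (replicate (Suc t) (round_gates N (2 ^ Suc T)))) (ket (0, False, 1))
      = scale_state (c * bit_sign (X p)) (ket (0, False, history N X (Suc t)))" .
  moreover have "cmod (c * bit_sign (X p)) = 1"
    using c by (simp add: bit_sign_def norm_mult)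
  ultimately show ?case
    by blast
qed

definition workspace_size :: "nat \<Rightarrow> nat" where
  "workspace_size N = 2 ^ Suc (rounds N)"

definition majority_network :: "nat \<Rightarrow> step list" where
  "majority_network N = concat (replicate (rounds N) (round_gates N (workspace_size N))) @
     [Gate (select_gate N (workspace_size N)), Query]"

text \<open>If no block survives, the input is a tie, whose majority value is 1.\<close>

definition majority_output :: "nat \<Rightarrow> bstate \<Rightarrow> bool" where
  "majority_output N = (\<lambda>(i, b, z). b \<or> active N (config_of N z) = {})"

lemma two_le_or_rounds_eq_0: "1 \<le> N \<Longrightarrow> 2 \<le> N \<or> rounds N = 0"
  using binweight_rec[of 1] by (cases "N = 1") (auto simp: rounds_def)

lemma cost_majority_network: "cost (majority_network N) = Suc (rounds N)"
proof -
  have "length (filter P (concat (replicate t gs))) = t * length (filter P gs)" for P t and gs :: "step list"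
    by (induction t) auto
  then show ?thesis
    by (simp add: cost_def majority_network_def round_gates_def phase_oracle_def)
qed

lemma network_ok_majority_network:
  assumes "1 \<le> N"
  shows "network_ok N (workspace_size N) (0, False, 1) (majority_network N)"
  unfolding network_ok_def
proof (intro conjI allI impI)
  show "(0, False, 1) \<in> basis_set N (workspace_size N)"
    using assms one_less_power[of "2::nat" "Suc (rounds N)"] by (simp add: workspace_size_def)
next
  fix U
  assume U: "Gate U \<in> set (majority_network N)"
  show "unitary_on (basis_set N (workspace_size N)) U"
  proof (cases "Gate U \<in> set (round_gates N (workspace_size N)) \<and> 0 < rounds N")
    case True
    then have "2 \<le> N"
      using two_le_or_rounds_eq_0[OF assms] by auto
    then show ?thesis
      using True unitary_hadamard spread_gate(1) gather_gate(1) record_gate(1)[OF assms]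
        unitary_pauli_z[OF finite_basis_set]
      by (auto simp: round_gates_def phase_oracle_def)
  next
    case False
    then have "U = select_gate N (workspace_size N)"
      using U by (auto simp: majority_network_def)
    then show ?thesis
      using select_gate(1)[OF assms] by simp
  qed
qed

lemma out_prob_eq_1:
  assumes "run N M X gs (ket s0) = scale_state c (ket s)" "cmod c = 1" "s \<in> basis_set N M" "out s = r"
  shows "out_prob N M s0 gs out X r = 1"
proof -
  have "(cmod (run N M X gs (ket s0) x))\<^sup>2 = (if x = s then 1 else 0)" for x
    using assms(1,2) by (simp add: scale_state_def ket_def)
  then show ?thesis
    using assms(3,4) by (simp add: out_prob_def sum.delta')
qed

lemma computes_exactly_majority_network:
  assumes "1 \<le> N"
  shows "computes_exactly N (workspace_size N) (0, False, 1) (majority_network N) (majority_output N) (majority N)"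
  unfolding computes_exactly_def
proof
  fix X
  let ?M = "workspace_size N" and ?w = "history N X (rounds N)"
  let ?r = "top_index N (config_of N ?w)"
  obtain c where c: "cmod c = 1"
    and after_rounds: "run N ?M X (concat (replicate (rounds N) (round_gates N ?M))) (ket (0, False, 1))
                 = scale_state c (ket (0, False, ?w))"
    using run_rounds[OF two_le_or_rounds_eq_0[OF assms] order_refl] unfolding workspace_size_def by blast
  have w: "?w < ?M" and r: "?r < N"
    using history_bounds[of N X "rounds N"] top_index_less assms by (auto simp: workspace_size_def)
  have "run N ?M X (majority_network N) (ket (0, False, 1)) = scale_state c (ket (?r, X ?r, ?w))"
    using select_gate(2)[OF assms w] w r
    unfolding majority_network_def run_append after_rounds
    by (simp add: run_scale_state apply_op_scale_state query_op_ket)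
  moreover have "majority_output N (?r, X ?r, ?w) = majority N X"
    using majority_from_final_config[OF no_mergeable_pair_after_rounds signed_mass_round_config]
    by (simp add: majority_output_def)
  ultimately show "out_prob N ?M (0, False, 1) (majority_network N) (majority_output N) X (majority N X) = 1"
    using c w r by (intro out_prob_eq_1) auto
qed

theorem mainTheorem3:
  fixes N :: nat
  assumes "N \<ge> 1"
  shows "\<exists>M s0 gs out. network_ok N M s0 gs \<and>
           computes_exactly N M s0 gs out (majority N) \<and>
           cost gs \<le> N + 1 - binweight N"
proof (intro exI conjI)
  show "network_ok N (workspace_size N) (0, False, 1) (majority_network N)"
    using assms by (rule network_ok_majority_network)
  show "computes_exactly N (workspace_size N) (0, False, 1) (majority_network N) (majority_output N) (majority N)"
    using assms by (rule computes_exactly_majority_network)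
  show "cost (majority_network N) \<le> N + 1 - binweight N"
    using binweight_le[of N] by (simp add: cost_majority_network rounds_def)
qed

end
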